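(* Let $\mathcal{H}$ be an $n$-dimensional (real or complex) Hilbert space, let $F=\{f_i\}_{i=1}^N$ be a frame for $\mathcal{H}$ with frame operator $S_F$, and let $\{q_i\}_{i=1}^N$ be the weight number sequence associated with a probability sequence $\{p_i\}_{i=1}^N$. Let $l=\max_{1\le i\le N}\{q_i\|S_F^{-1/2}f_i\|^2+q_i\|f_i\|\,\|S_F^{-1}f_i\|\}$, $\Lambda_1=\{i: q_i\|S_F^{-1/2}f_i\|^2+q_i\|f_i\|\,\|S_F^{-1}f_i\|=l\}$, $\Lambda_2=\{1,\dots,N\}\setminus\Lambda_1$, and $H_j=\operatorname{span}\{f_i:i\in\Lambda_j\}$ for $j=1,2$. If $H_1\cap H_2=\{0\}$ and $\{f_i\}_{i\in\Lambda_1}$ is linearly independent, then $S_F^{-1}F\in\Delta_F^{(1)}$. Moreover, if in addition $N>n$, then $S_F^{-1}F$ is not the unique 1-erasure PASOD-frame of $F$.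
   Context: A finite sequence $F=\{f_i\}_{i=1}^N$ in $\mathcal{H}$ is a frame if there are $A,B>0$ with $A\|f\|^2\le\sum_{i=1}^N|\langle f,f_i\rangle|^2\le B\|f\|^2$ for all $f$. The frame operator is $S_Ff=\sum_{i=1}^N\langle f,f_i\rangle f_i$ (positive invertible) and the canonical dual is $S_F^{-1}F=\{S_F^{-1}f_i\}_{i=1}^N$. A frame $G=\{g_i\}_{i=1}^N$ is a dual of $F$ if $f=\sum_i\langle f,f_i\rangle g_i=\sum_i\langle f,g_i\rangle f_i$ for all $f$. A probability sequence is $\{p_i\}_{i=1}^N$ with $0\le p_i\le1$, $\sum p_i=1$; weight numbers $q_i=\frac{\sum_{j} p_j}{\sum_{j} p_j-p_i}\cdot\frac{N-1}{n}$. For $\Lambda\subseteq\{1,\dots,N\}$ the error operator is $E_{\Lambda,(F,G)}f=\sum_{i\in\Lambda}q_i\langle f,f_i\rangle g_i$. Set $\mathcal{A}_P^{(1)}(F,G)=\max_{|\Lambda|=1}\frac{\|E_{\Lambda,(F,G)}\|+\rho(E_{\Lambda,(F,G)})}{2}$ (operator norm and spectral radius). $\Delta_F^{(1)}$ is the set of duals $G$ of $F$ minimizing $\mathcal{A}_P^{(1)}(F,\cdot)$ over all duals of $F$ (1-erasure PASOD-frames of $F$). *)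

theory Defs
  imports "HOL-Analysis.Analysis"
begin

text \<open>The Hilbert space H is modelled as 'k^'n with 'k = complex (cj = cnj) or
'k = real (cj = id); n = CARD('n). Inner product linear in the first argument.
Frames are indexed by {1..N}.\<close>

definition ip :: "('k::field \<Rightarrow> 'k) \<Rightarrow> 'k^'n::finite \<Rightarrow> 'k^'n \<Rightarrow> 'k" where
  "ip cj x y = (\<Sum>i\<in>UNIV. x$i * cj (y$i))"

definition is_frame :: "('k::real_normed_field \<Rightarrow> 'k) \<Rightarrow> nat \<Rightarrow> (nat \<Rightarrow> 'k^'n::finite) \<Rightarrow> bool" where
  "is_frame cj N F \<longleftrightarrow> (\<exists>A B. 0 < A \<and> 0 < B \<and>
     (\<forall>f. A * (norm f)^2 \<le> (\<Sum>i=1..N. (norm (ip cj f (F i)))^2) \<and>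
          (\<Sum>i=1..N. (norm (ip cj f (F i)))^2) \<le> B * (norm f)^2))"

definition frame_op :: "('k::field \<Rightarrow> 'k) \<Rightarrow> nat \<Rightarrow> (nat \<Rightarrow> 'k^'n::finite) \<Rightarrow> 'k^'n \<Rightarrow> 'k^'n" where
  "frame_op cj N F = (\<lambda>f. \<Sum>i=1..N. ip cj f (F i) *s F i)"

definition klinear :: "('k::field^'n::finite \<Rightarrow> 'k^'n) \<Rightarrow> bool" where
  "klinear T \<longleftrightarrow> (\<forall>x y. T (x + y) = T x + T y) \<and> (\<forall>c x. T (c *s x) = c *s T x)"

definition positive_op :: "('k::real_normed_field \<Rightarrow> 'k) \<Rightarrow> ('k^'n::finite \<Rightarrow> 'k^'n) \<Rightarrow> bool" where
  "positive_op cj T \<longleftrightarrow> klinear T \<and> (\<forall>x y. ip cj (T x) y = ip cj x (T y)) \<and>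
     (\<forall>x. \<exists>r\<ge>0. ip cj (T x) x = of_real r)"

definition op_sqrt :: "('k::real_normed_field \<Rightarrow> 'k) \<Rightarrow> ('k^'n::finite \<Rightarrow> 'k^'n) \<Rightarrow> ('k^'n \<Rightarrow> 'k^'n)" where
  "op_sqrt cj T = (THE R. positive_op cj R \<and> R \<circ> R = T)"

definition canonical_dual :: "('k::field \<Rightarrow> 'k) \<Rightarrow> nat \<Rightarrow> (nat \<Rightarrow> 'k^'n::finite) \<Rightarrow> nat \<Rightarrow> 'k^'n" where
  "canonical_dual cj N F = (\<lambda>i. inv (frame_op cj N F) (F i))"

definition is_dual :: "('k::real_normed_field \<Rightarrow> 'k) \<Rightarrow> nat \<Rightarrow> (nat \<Rightarrow> 'k^'n::finite) \<Rightarrow> (nat \<Rightarrow> 'k^'n) \<Rightarrow> bool" where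
  "is_dual cj N F G \<longleftrightarrow> is_frame cj N G \<and>
     (\<forall>f. f = (\<Sum>i=1..N. ip cj f (F i) *s G i) \<and> f = (\<Sum>i=1..N. ip cj f (G i) *s F i))"

definition prob_seq :: "nat \<Rightarrow> (nat \<Rightarrow> real) \<Rightarrow> bool" where
  "prob_seq N p \<longleftrightarrow> (\<forall>i\<in>{1..N}. 0 \<le> p i \<and> p i \<le> 1) \<and> (\<Sum>i=1..N. p i) = 1"

definition weight_num :: "nat \<Rightarrow> nat \<Rightarrow> (nat \<Rightarrow> real) \<Rightarrow> nat \<Rightarrow> real" where
  "weight_num N n p i = (\<Sum>j=1..N. p j) / ((\<Sum>j=1..N. p j) - p i) * ((real N - 1) / real n)"

definition error_op :: "('k::real_normed_field \<Rightarrow> 'k) \<Rightarrow> (nat \<Rightarrow> real) \<Rightarrow> (nat \<Rightarrow> 'k^'n::finite)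
    \<Rightarrow> (nat \<Rightarrow> 'k^'n) \<Rightarrow> nat set \<Rightarrow> 'k^'n \<Rightarrow> 'k^'n" where
  "error_op cj q F G \<Lambda> = (\<lambda>f. \<Sum>i\<in>\<Lambda>. (of_real (q i) * ip cj f (F i)) *s G i)"

definition is_eigenvalue :: "('k::field^'n::finite \<Rightarrow> 'k^'n) \<Rightarrow> 'k \<Rightarrow> bool" where
  "is_eigenvalue T c \<longleftrightarrow> (\<exists>v. v \<noteq> 0 \<and> T v = c *s v)"

definition spec_radius :: "('k::real_normed_field^'n::finite \<Rightarrow> 'k^'n) \<Rightarrow> real" where
  "spec_radius T = (let E = {norm c | c. is_eigenvalue T c} in if E = {} then 0 else Sup E)"

definition A1 :: "('k::real_normed_field \<Rightarrow> 'k) \<Rightarrow> nat \<Rightarrow> (nat \<Rightarrow> real) \<Rightarrow> (nat \<Rightarrow> 'k^'n::finite)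
    \<Rightarrow> (nat \<Rightarrow> 'k^'n) \<Rightarrow> real" where
  "A1 cj N p F G = Max ((\<lambda>i. (onorm (error_op cj (weight_num N CARD('n) p) F G {i})
        + spec_radius (error_op cj (weight_num N CARD('n) p) F G {i})) / 2) ` {1..N})"

definition pasod1 :: "('k::real_normed_field \<Rightarrow> 'k) \<Rightarrow> nat \<Rightarrow> (nat \<Rightarrow> real) \<Rightarrow> (nat \<Rightarrow> 'k^'n::finite)
    \<Rightarrow> (nat \<Rightarrow> 'k^'n) set" where
  "pasod1 cj N p F = {G. is_dual cj N F G \<and> (\<forall>G'. is_dual cj N F G' \<longrightarrow> A1 cj N p F G \<le> A1 cj N p F G')}"

definition crit :: "('k::real_normed_field \<Rightarrow> 'k) \<Rightarrow> nat \<Rightarrow> (nat \<Rightarrow> real) \<Rightarrow> (nat \<Rightarrow> 'k^'n::finite) \<Rightarrow> nat \<Rightarrow> real" where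
  "crit cj N p F i = (let q = weight_num N CARD('n) p; Si = inv (frame_op cj N F) in
     q i * (norm (op_sqrt cj Si (F i)))^2 + q i * norm (F i) * norm (Si (F i)))"

definition lmax :: "('k::real_normed_field \<Rightarrow> 'k) \<Rightarrow> nat \<Rightarrow> (nat \<Rightarrow> real) \<Rightarrow> (nat \<Rightarrow> 'k^'n::finite) \<Rightarrow> real" where
  "lmax cj N p F = Max (crit cj N p F ` {1..N})"

definition Lambda1 :: "('k::real_normed_field \<Rightarrow> 'k) \<Rightarrow> nat \<Rightarrow> (nat \<Rightarrow> real) \<Rightarrow> (nat \<Rightarrow> 'k^'n::finite) \<Rightarrow> nat set" where
  "Lambda1 cj N p F = {i\<in>{1..N}. crit cj N p F i = lmax cj N p F}"

definition kspan_fam :: "nat set \<Rightarrow> (nat \<Rightarrow> 'k::field^'n::finite) \<Rightarrow> ('k^'n) set" where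
  "kspan_fam \<Lambda> F = {x. \<exists>c. x = (\<Sum>i\<in>\<Lambda>. c i *s F i)}"

definition lin_indep_fam :: "nat set \<Rightarrow> (nat \<Rightarrow> 'k::field^'n::finite) \<Rightarrow> bool" where
  "lin_indep_fam \<Lambda> F \<longleftrightarrow> (\<forall>c. (\<Sum>i\<in>\<Lambda>. c i *s F i) = 0 \<longrightarrow> (\<forall>i\<in>\<Lambda>. c i = 0))"

end

theory Submission
  imports Defs
begin

text \<open>Two duals \<open>G\<close>, \<open>G'\<close> of \<open>F\<close> satisfy \<open>\<Sum>\<^sub>i \<langle>h, g\<^sub>i - g'\<^sub>i\<rangle> f\<^sub>i = 0\<close> for every \<open>h\<close>. Since
  the \<open>f\<^sub>i\<close> with \<open>i \<in> \<Lambda>\<^sub>1\<close> are independent and their span meets that of the remaining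
  \<open>f\<^sub>i\<close> only in \<open>0\<close>, every dual coincides with \<open>S\<^sup>-\<^sup>1F\<close> on \<open>\<Lambda>\<^sub>1\<close>. The one-erasure
  error operator \<open>f \<mapsto> q\<^sub>i\<langle>f, f\<^sub>i\<rangle>g\<^sub>i\<close> has rank one, with norm \<open>q\<^sub>i\<parallel>f\<^sub>i\<parallel>\<parallel>g\<^sub>i\<parallel>\<close> and spectral
  radius \<open>q\<^sub>i|\<langle>g\<^sub>i, f\<^sub>i\<rangle>|\<close>; for \<open>g\<^sub>i = S\<^sup>-\<^sup>1f\<^sub>i\<close> their sum is the quantity maximised by \<open>l\<close>,
  because \<open>\<parallel>S\<^sup>-\<^sup>1\<^sup>/\<^sup>2f\<^sub>i\<parallel>\<^sup>2 = \<langle>S\<^sup>-\<^sup>1f\<^sub>i, f\<^sub>i\<rangle>\<close>. Hence every dual has cost at least \<open>l/2\<close>,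
  which \<open>S\<^sup>-\<^sup>1F\<close> attains.

  If \<open>N > n\<close>, the \<open>f\<^sub>i\<close> with \<open>i \<notin> \<Lambda>\<^sub>1\<close> are dependent, say \<open>\<Sum> c\<^sub>i f\<^sub>i = 0\<close>, and
  \<open>S\<^sup>-\<^sup>1f\<^sub>i + t cnj(c\<^sub>i) w\<close> is again a dual. It agrees with \<open>S\<^sup>-\<^sup>1F\<close> on \<open>\<Lambda>\<^sub>1\<close>, and off
  \<open>\<Lambda>\<^sub>1\<close> the cost of \<open>S\<^sup>-\<^sup>1F\<close> is strictly below \<open>l/2\<close>, so for small \<open>t \<noteq> 0\<close> it is
  another optimal dual.

  Since \<open>S\<^sup>-\<^sup>1\<^sup>/\<^sup>2\<close> is a definite description, it is meaningful only once positive square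
  roots are known to exist uniquely; both follow from the spectral theorem, proved
  variationally.\<close>

lemma norm_vector_smult: "norm (c *s (x::'k::real_normed_field^'n)) = norm c * norm x"
proof -
  have "norm (c *s x) = L2_set (\<lambda>i. norm c * norm (x$i)) UNIV"
    by (simp add: norm_vec_def norm_mult)
  also have "\<dots> = norm c * norm x"
    by (simp add: norm_vec_def L2_set_right_distrib)
  finally show ?thesis .
qed

lemma scaleR_eq_of_real_smult: "r *\<^sub>R (x::'k::real_normed_field^'n) = (of_real r :: 'k) *s x"
  by (simp add: vec_eq_iff scaleR_conv_of_real[where 'a='k])

lemma klinear_add: "klinear T \<Longrightarrow> T (x + y) = T x + T y"
  unfolding klinear_def by blast

lemma klinear_smult: "klinear T \<Longrightarrow> T (c *s x) = c *s T x"
  unfolding klinear_def by blast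

lemma klinear_imp_vec_linear: "klinear T \<Longrightarrow> Vector_Spaces.linear (*s) (*s) T"
  unfolding Vector_Spaces.linear_def module_hom_def module_hom_axioms_def
  by (auto simp: klinear_add klinear_smult vec.module_axioms vec.vector_space_axioms)

lemma klinear_0: "klinear T \<Longrightarrow> T 0 = 0"
  by (rule vec.linear_0[OF klinear_imp_vec_linear])

lemma klinear_diff: "klinear T \<Longrightarrow> T (x - y) = T x - T y"
  by (rule vec.linear_diff[OF klinear_imp_vec_linear])

lemma klinear_sum: "klinear T \<Longrightarrow> T (sum f A) = (\<Sum>i\<in>A. T (f i))"
  by (rule vec.linear_sum[OF klinear_imp_vec_linear])

lemma klinear_imp_bounded_linear:
  "klinear (T::'k::{real_normed_field,euclidean_space}^'n \<Rightarrow> _) \<Longrightarrow> bounded_linear T"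
  by (auto intro!: linearI simp: linear_conv_bounded_linear[symmetric] klinear_add klinear_smult
      scaleR_eq_of_real_smult)

lemma lin_indep_fam_card_le:
  assumes fin: "finite I" and li: "lin_indep_fam I (F::nat \<Rightarrow> 'k::field^'n::finite)"
  shows "card I \<le> CARD('n)"
proof -
  have inj: "inj_on F I"
  proof (rule inj_onI, rule ccontr)
    fix a b assume ab: "a \<in> I" "b \<in> I" "F a = F b" "a \<noteq> b"
    define c where "c j = (if j = a then 1 else if j = b then -1 else (0::'k))" for j
    have "(\<Sum>j\<in>I. c j *s F j) = (\<Sum>j\<in>I. (if j = a then F a else 0) - (if j = b then F b else 0))"
      by (rule sum.cong) (auto simp: c_def ab)
    also have "\<dots> = 0"
      using ab fin by (simp add: sum_subtractf)
    finally have "c a = 0"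
      using li ab unfolding lin_indep_fam_def by blast
    then show False
      by (simp add: c_def)
  qed
  have "vec.independent (F ` I)"
    unfolding vec.independent_explicit
  proof (intro conjI allI impI ballI)
    fix c v assume "(\<Sum>v\<in>F ` I. c v *s v) = 0" and "v \<in> F ` I"
    then show "c v = 0"
      using li unfolding lin_indep_fam_def sum.reindex[OF inj] by auto
  qed (use fin in simp)
  then have "card (F ` I) \<le> vec.dim (F ` I)"
    using vec.independent_bound_general by blast
  also have "\<dots> \<le> vec.dim (UNIV :: ('k^'n) set)"
    by (rule vec.dim_subset) simp
  finally show ?thesis
    using card_image[OF inj] by (simp add: card_cart_basis)
qed

lemma kspan_fam_trivial_inter_sum_eq_0:
  assumes "kspan_fam L1 F \<inter> kspan_fam L2 F = {0}"
    and "(\<Sum>i\<in>L1. a i *s F i) = (\<Sum>i\<in>L2. b i *s F i)"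
  shows "(\<Sum>i\<in>L1. a i *s F i) = 0"
proof -
  have "(\<Sum>i\<in>L1. a i *s F i) \<in> kspan_fam L1 F"
    unfolding kspan_fam_def by blast
  moreover have "(\<Sum>i\<in>L1. a i *s F i) \<in> kspan_fam L2 F"
    unfolding kspan_fam_def assms(2) by blast
  ultimately show ?thesis
    using assms(1) by blast
qed

lemma lin_indep_fam_Un:
  assumes fin: "finite L1" "finite L2" and disj: "L1 \<inter> L2 = {}"
    and int: "kspan_fam L1 F \<inter> kspan_fam L2 F = {0}"
    and li: "lin_indep_fam L1 F" "lin_indep_fam L2 F"
  shows "lin_indep_fam (L1 \<union> L2) (F::nat \<Rightarrow> 'k::field^'n::finite)"
  unfolding lin_indep_fam_def
proof (intro allI impI)
  fix c assume "(\<Sum>i\<in>L1 \<union> L2. c i *s F i) = 0"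
  then have eq: "(\<Sum>i\<in>L1. c i *s F i) = (\<Sum>i\<in>L2. (- c i) *s F i)"
    using fin disj by (simp add: sum.union_disjoint sum_negf eq_neg_iff_add_eq_0)
  then have "(\<Sum>i\<in>L1. c i *s F i) = 0" "(\<Sum>i\<in>L2. (- c i) *s F i) = 0"
    using kspan_fam_trivial_inter_sum_eq_0[OF int eq] by simp_all
  then show "\<forall>i\<in>L1 \<union> L2. c i = 0"
    using li(1)[unfolded lin_indep_fam_def, rule_format, of c]
      li(2)[unfolded lin_indep_fam_def, rule_format, of "\<lambda>i. - c i"] by auto
qed

lemma dependent_complement:
  assumes "L \<subseteq> {1..N}" "kspan_fam L F \<inter> kspan_fam ({1..N} - L) F = {0}" "lin_indep_fam L F"
    and "N > CARD('n)"
  shows "\<not> lin_indep_fam ({1..N} - L) (F::nat \<Rightarrow> 'k::field^'n::finite)"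
proof
  assume "lin_indep_fam ({1..N} - L) F"
  then have "lin_indep_fam (L \<union> ({1..N} - L)) F"
    using assms(1-3) finite_subset by (intro lin_indep_fam_Un) auto
  then have "card {1..N} \<le> CARD('n)"
    using assms(1) by (intro lin_indep_fam_card_le) (simp_all add: Un_absorb1)
  with assms(4) show False
    by simp
qed

text \<open>The two instances are \<open>(cnj, Re)\<close> on \<^typ>\<open>complex\<close> and \<open>(id, id)\<close> on \<^typ>\<open>real\<close>.\<close>

locale conjugation =
  fixes cj :: "'k::{real_normed_field,euclidean_space} \<Rightarrow> 'k" and re :: "'k \<Rightarrow> real"
  assumes cj_add: "cj (a + b) = cj a + cj b"
    and cj_mult: "cj (a * b) = cj a * cj b"
    and cj_cj: "cj (cj a) = a"
    and cj_of_real: "cj (of_real r) = of_real r"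
    and mult_cj: "a * cj a = of_real ((norm a)^2)"
    and norm_cj: "norm (cj a) = norm a"
    and re_inner: "re (a * cj b) = inner a b"
    and re_add: "re (a + b) = re a + re b"
    and re_scale: "re (of_real r * a) = r * re a"
    and re_of_real: "re (of_real r) = r"
    and cj_eq_imp_real: "cj a = a \<Longrightarrow> a = of_real (re a)"
begin

lemma cj_zero [simp]: "cj 0 = 0"
  using cj_of_real[of 0] by simp

lemma cj_minus: "cj (- a) = - cj a"
  by (metis add.right_inverse cj_add cj_zero minus_unique)

lemma cj_sum: "cj (sum f A) = (\<Sum>i\<in>A. cj (f i))"
  by (induction A rule: infinite_finite_induct) (auto simp: cj_add)

lemma re_zero [simp]: "re 0 = 0"
  using re_of_real[of 0] by simp

lemma re_minus: "re (- a) = - re a"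
  using re_add[of a "- a"] by simp

lemma re_diff: "re (a - b) = re a - re b"
  using re_add[of a "- b"] re_minus by simp

lemma re_sum: "re (sum f A) = (\<Sum>i\<in>A. re (f i))"
  by (induction A rule: infinite_finite_induct) (auto simp: re_add)

lemma bounded_linear_cj: "bounded_linear cj"
  by (auto intro!: linearI simp: linear_conv_bounded_linear[symmetric] cj_add scaleR_conv_of_real
      cj_mult cj_of_real)

lemma bounded_linear_re: "bounded_linear re"
  by (auto intro!: linearI simp: linear_conv_bounded_linear[symmetric] re_add scaleR_conv_of_real
      re_scale)

lemma ip_add_left: "ip cj (x + y) z = ip cj x z + ip cj y z"
  by (simp add: ip_def distrib_right sum.distrib)

lemma ip_add_right: "ip cj x (y + z) = ip cj x y + ip cj x z"
  by (simp add: ip_def cj_add distrib_left sum.distrib)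

lemma ip_scale_left: "ip cj (c *s x) y = c * ip cj x y"
  by (simp add: ip_def sum_distrib_left mult.assoc)

lemma ip_scale_right: "ip cj x (c *s y) = cj c * ip cj x y"
  by (simp add: ip_def sum_distrib_left cj_mult mult_ac)

lemma ip_scaleR_left: "ip cj (r *\<^sub>R x) y = r *\<^sub>R ip cj x y"
  by (simp add: scaleR_eq_of_real_smult ip_scale_left scaleR_conv_of_real)

lemma ip_zero_left [simp]: "ip cj 0 y = 0"
  by (simp add: ip_def)

lemma ip_zero_right [simp]: "ip cj x 0 = 0"
  by (simp add: ip_def)

lemma ip_minus_left: "ip cj (- x) y = - ip cj x y"
  by (simp add: ip_def sum_negf)

lemma ip_minus_right: "ip cj x (- y) = - ip cj x y"
  by (simp add: ip_def sum_negf cj_minus)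

lemma ip_diff_left: "ip cj (x - y) z = ip cj x z - ip cj y z"
  using ip_add_left[of x "- y" z] ip_minus_left by simp

lemma ip_diff_right: "ip cj x (y - z) = ip cj x y - ip cj x z"
  using ip_add_right[of x y "- z"] ip_minus_right by simp

lemma ip_sum_left: "ip cj (sum f A) y = (\<Sum>i\<in>A. ip cj (f i) y)"
  by (induction A rule: infinite_finite_induct) (auto simp: ip_add_left)

lemma ip_sum_right: "ip cj x (sum f A) = (\<Sum>i\<in>A. ip cj x (f i))"
  by (induction A rule: infinite_finite_induct) (auto simp: ip_add_right)

lemma cj_ip: "cj (ip cj x y) = ip cj y x"
  by (simp add: ip_def cj_sum cj_mult cj_cj mult.commute)

lemma ip_self: "ip cj x x = of_real ((norm x)^2)"
proof -
  have "ip cj x x = of_real (\<Sum>i\<in>UNIV. (norm (x$i))^2)"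
    by (simp add: ip_def mult_cj)
  also have "(\<Sum>i\<in>UNIV. (norm (x$i))^2) = (norm x)^2"
    by (simp add: norm_vec_def L2_set_def sum_nonneg)
  finally show ?thesis .
qed

lemma ip_self_eq_0_iff: "ip cj x x = 0 \<longleftrightarrow> x = 0"
  by (simp add: ip_self)

lemma re_ip: "re (ip cj x y) = inner x y"
  by (simp add: ip_def re_sum re_inner inner_vec_def)

text \<open>Rotating \<open>x\<close> by the phase of \<open>\<langle>x, y\<rangle>\<close> makes the product real, and \<open>re \<langle>x, y\<rangle>\<close> is the
  real inner product, where Cauchy-Schwarz is available.\<close>
lemma norm_ip_le: "norm (ip cj x y) \<le> norm x * norm y"
proof (cases "ip cj x y = 0")
  case False
  define a where "a = ip cj x y"
  define u where "u = cj a / of_real (norm a)"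
  have a: "norm a > 0"
    using False by (simp add: a_def)
  have "ip cj (u *s x) y = cj a * a / of_real (norm a)"
    by (simp add: ip_scale_left u_def a_def)
  also have "cj a * a = of_real ((norm a)^2)"
    by (metis mult.commute mult_cj)
  finally have "norm a = re (ip cj (u *s x) y)"
    using a by (simp add: power2_eq_square re_of_real)
  also have "\<dots> \<le> norm (u *s x) * norm y"
    unfolding re_ip by (rule norm_cauchy_schwarz)
  also have "norm (u *s x) = norm x"
    using a by (simp add: norm_vector_smult u_def norm_divide norm_cj)
  finally show ?thesis
    by (simp add: a_def)
qed simp

lemma continuous_on_ip_left: "continuous_on S (\<lambda>x. ip cj (x::'k^'n::finite) e)"
  unfolding ip_def by (intro continuous_intros)

lemma continuous_on_form:
  assumes "klinear T"
  shows "continuous_on S (\<lambda>x. ip cj (T x) (x::'k^'n::finite))"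
proof -
  have "continuous_on S T"
    using klinear_imp_bounded_linear[OF assms] linear_continuous_on by blast
  moreover have "continuous_on S (\<lambda>x. cj (x $ i))" for i
    by (rule linear_continuous_on, rule bounded_linear_compose[OF bounded_linear_cj bounded_linear_vec_nth])
  ultimately show ?thesis
    unfolding ip_def by (intro continuous_on_sum continuous_on_mult continuous_on_component)
qed

section \<open>Self-adjoint operators\<close>

definition self_adjoint :: "('k^'n::finite \<Rightarrow> 'k^'n) \<Rightarrow> bool" where
  "self_adjoint T \<longleftrightarrow> (\<forall>x y. ip cj (T x) y = ip cj x (T y))"

definition orth_compl :: "('k^'n::finite) set \<Rightarrow> ('k^'n) set" where
  "orth_compl E = {x. \<forall>e\<in>E. ip cj x e = 0}"

definition orthonormal :: "('k^'n::finite) set \<Rightarrow> bool" where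
  "orthonormal E \<longleftrightarrow> (\<forall>e\<in>E. \<forall>e'\<in>E. ip cj e e' = (if e = e' then 1 else 0))"

lemma self_adjoint_form_real: "self_adjoint T \<Longrightarrow> ip cj (T x) x = of_real (re (ip cj (T x) x))"
  by (rule cj_eq_imp_real) (simp add: cj_ip self_adjoint_def)

lemma re_form_scale:
  "klinear T \<Longrightarrow> re (ip cj (T (of_real c *s x)) (of_real c *s x)) = c^2 * re (ip cj (T x) x)"
  by (simp add: klinear_smult ip_scale_left ip_scale_right cj_of_real re_scale power2_eq_square
      mult.assoc)

text \<open>Along the line \<open>t \<mapsto> v - t B v\<close> the form equals \<open>t\<^sup>2 \<langle>B(Bv),Bv\<rangle> - 2t\<parallel>Bv\<parallel>\<^sup>2\<close>,
  which is negative for small \<open>t > 0\<close> unless \<open>Bv = 0\<close>.\<close>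
lemma nonneg_form_zero_imp_kernel:
  fixes B :: "'k^'n::finite \<Rightarrow> 'k^'n"
  assumes B: "klinear B" "self_adjoint B"
    and nonneg: "\<And>t::real. re (ip cj (B (v - of_real t *s B v)) (v - of_real t *s B v)) \<ge> 0"
    and zero: "ip cj (B v) v = 0"
  shows "B v = 0"
proof -
  define w where "w = B v"
  define c where "c = (norm w)^2"
  define r where "r = re (ip cj (B w) w)"
  have e1: "ip cj (B v) w = of_real c"
    by (simp add: w_def c_def ip_self)
  have e2: "ip cj (B w) v = of_real c"
    using B(2) by (simp add: self_adjoint_def w_def c_def ip_self)
  have e3: "ip cj (B w) w = of_real r"
    unfolding r_def by (rule self_adjoint_form_real[OF B(2)])
  have line: "0 \<le> t * t * r - 2 * t * c" for t
  proof -
    have "ip cj (B (v - of_real t *s w)) (v - of_real t *s w)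
        = ip cj w v - ip cj (of_real t *s B w) v
          - (ip cj w (of_real t *s w) - ip cj (of_real t *s B w) (of_real t *s w))"
      by (simp only: klinear_diff[OF B(1)] klinear_smult[OF B(1)] flip: w_def)
        (simp only: ip_diff_left ip_diff_right)
    also have "\<dots> = of_real (t * t * r - 2 * t * c)"
      unfolding ip_scale_left ip_scale_right cj_of_real using zero e1 e2 e3
      by (simp add: algebra_simps flip: w_def)
    finally have "re (ip cj (B (v - of_real t *s w)) (v - of_real t *s w)) = t * t * r - 2 * t * c"
      by (simp only: re_of_real)
    then show ?thesis
      using nonneg[of t] by (simp add: w_def)
  qed
  have "c = 0"
  proof (rule ccontr)
    assume "c \<noteq> 0"
    then have c: "c > 0"
      by (simp add: c_def)
    define t where "t = c / (\<bar>r\<bar> + 1)"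
    have t: "t > 0"
      using c by (simp add: t_def)
    have "t * r \<le> t * \<bar>r\<bar>"
      using t by (simp add: mult_left_mono)
    also have "\<dots> = c * (\<bar>r\<bar> / (\<bar>r\<bar> + 1))"
      by (simp add: t_def)
    also have "\<dots> < c * 1"
      by (rule mult_strict_left_mono[OF _ c]) simp
    finally have "t * (t * r) < t * c"
      using t by simp
    with line[of t] t c show False
      by (simp add: mult.assoc)
  qed
  then show ?thesis
    by (simp add: c_def w_def)
qed

lemma orth_compl_smult: "x \<in> orth_compl E \<Longrightarrow> c *s x \<in> orth_compl E"
  by (simp add: orth_compl_def ip_scale_left)

lemma orth_compl_diff: "x \<in> orth_compl E \<Longrightarrow> y \<in> orth_compl E \<Longrightarrow> x - y \<in> orth_compl E"
  by (simp add: orth_compl_def ip_diff_left)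

lemma self_adjoint_orth_compl_eigenvectors:
  assumes "self_adjoint T" and "\<forall>e\<in>E. \<exists>r. T e = of_real r *s e" and "x \<in> orth_compl E"
  shows "T x \<in> orth_compl E"
  unfolding orth_compl_def
proof (intro CollectI ballI)
  fix e assume "e \<in> E"
  then obtain r where "T e = of_real r *s e"
    using assms(2) by blast
  then show "ip cj (T x) e = 0"
    using assms(1,3) \<open>e \<in> E\<close> by (simp add: self_adjoint_def ip_scale_right orth_compl_def)
qed

lemma form_attains_max_on_orth_compl:
  fixes T :: "'k^'n::finite \<Rightarrow> 'k^'n"
  assumes T: "klinear T" and u: "u \<in> orth_compl E" "u \<noteq> 0"
  shows "\<exists>v. v \<in> orth_compl E \<and> norm v = 1 \<and>
     (\<forall>x\<in>orth_compl E. re (ip cj (T x) x) \<le> re (ip cj (T v) v) * (norm x)^2)"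
proof -
  define K where "K = sphere 0 1 \<inter> (\<Inter>e\<in>E. {x. ip cj x e = 0})"
  have K: "x \<in> K \<longleftrightarrow> x \<in> orth_compl E \<and> norm x = 1" for x
    by (auto simp: K_def orth_compl_def)
  have normalize: "of_real (1 / norm x) *s x \<in> K" if "x \<in> orth_compl E" "x \<noteq> 0" for x
    using that by (simp add: K orth_compl_smult norm_vector_smult norm_divide)
  have "compact K"
    unfolding K_def
    by (intro compact_Int_closed compact_sphere closed_INT ballI closed_Collect_eq
        continuous_on_ip_left continuous_on_const)
  moreover have "K \<noteq> {}"
    using normalize[OF u] by blast
  moreover have "continuous_on K (\<lambda>x. re (ip cj (T x) x))"
    by (rule continuous_on_compose2[OF linear_continuous_on[OF bounded_linear_re]
          continuous_on_form[OF T]]) auto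
  ultimately obtain v where v: "v \<in> K" and max: "\<forall>y\<in>K. re (ip cj (T y) y) \<le> re (ip cj (T v) v)"
    using continuous_attains_sup by blast
  have "re (ip cj (T x) x) \<le> re (ip cj (T v) v) * (norm x)^2" if x: "x \<in> orth_compl E" for x
  proof (cases "x = 0")
    case False
    have "re (ip cj (T x) x) / (norm x)^2 \<le> re (ip cj (T v) v)"
      using max[rule_format, OF normalize[OF x False]] re_form_scale[OF T, of "1 / norm x" x]
      by (simp add: power_divide)
    then show ?thesis
      using False by (simp add: divide_le_eq mult.commute)
  qed (simp add: klinear_0[OF T])
  then show ?thesis
    using v K by blast
qed

text \<open>The maximiser of the form on the unit sphere of \<open>orth_compl E\<close> is an eigenvector: the
  form of \<open>M - T\<close> is nonnegative on the \<open>T\<close>-invariant space \<open>orth_compl E\<close> and vanishes at it.\<close>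
lemma eigenvector_in_orth_compl:
  fixes T :: "'k^'n::finite \<Rightarrow> 'k^'n"
  assumes T: "klinear T" "self_adjoint T"
    and E: "\<forall>e\<in>E. \<exists>r. T e = of_real r *s e"
    and u: "u \<in> orth_compl E" "u \<noteq> 0"
  shows "\<exists>v M. v \<in> orth_compl E \<and> norm v = 1 \<and> T v = of_real M *s v"
proof -
  obtain v where v: "v \<in> orth_compl E" "norm v = 1"
    and max: "\<forall>x\<in>orth_compl E. re (ip cj (T x) x) \<le> re (ip cj (T v) v) * (norm x)^2"
    using form_attains_max_on_orth_compl[OF T(1) u] by blast
  define M where "M = re (ip cj (T v) v)"
  define B where "B x = of_real M *s x - T x" for x
  have B: "klinear B"
    using T(1) unfolding klinear_def B_def
    by (auto simp: vector_add_ldistrib vector_ssub_ldistrib vector_smult_assoc mult.commute)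
  have "self_adjoint B"
    using T(2) unfolding self_adjoint_def B_def
    by (simp add: ip_diff_left ip_diff_right ip_scale_left ip_scale_right cj_of_real)
  moreover have "ip cj (B v) v = 0"
    using self_adjoint_form_real[OF T(2), of v] v(2)
    by (simp add: B_def ip_diff_left ip_scale_left ip_self flip: M_def)
  moreover have "0 \<le> re (ip cj (B x) x)" if "x \<in> orth_compl E" for x
    using max that by (simp add: B_def ip_diff_left ip_scale_left ip_self re_diff re_scale
        re_of_real del: of_real_power flip: M_def)
  moreover have "v - of_real t *s B v \<in> orth_compl E" for t
  proof -
    have "B v \<in> orth_compl E"
      unfolding B_def
      by (intro orth_compl_diff orth_compl_smult v(1) self_adjoint_orth_compl_eigenvectors[OF T(2) E])
    then show ?thesis
      by (intro orth_compl_diff orth_compl_smult v(1))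
  qed
  ultimately have "B v = 0"
    using nonneg_form_zero_imp_kernel[OF B] by blast
  then have "T v = of_real M *s v"
    by (simp add: B_def)
  then show ?thesis
    using v by blast
qed

lemma ip_orthonormal_sum:
  assumes "finite E" "orthonormal E" "e \<in> E"
  shows "ip cj (\<Sum>v\<in>E. a v *s v) e = a e"
proof -
  have "ip cj (\<Sum>v\<in>E. a v *s v) e = (\<Sum>v\<in>E. if v = e then a v else 0)"
    unfolding ip_sum_left ip_scale_left
    by (rule sum.cong) (use assms in \<open>auto simp: orthonormal_def\<close>)
  then show ?thesis
    using assms by simp
qed

lemma orthonormal_card_le:
  assumes "finite E" "orthonormal (E::('k^'n::finite) set)"
  shows "card E \<le> CARD('n)"
proof -
  have "vec.independent E"
    unfolding vec.independent_explicit
  proof (intro conjI allI impI ballI)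
    fix c v assume "(\<Sum>v\<in>E. c v *s v) = 0" "v \<in> E"
    then show "c v = 0"
      using ip_orthonormal_sum[OF assms \<open>v \<in> E\<close>, of c] by simp
  qed (rule assms(1))
  then have "card E \<le> vec.dim E"
    using vec.independent_bound_general by blast
  also have "\<dots> \<le> vec.dim (UNIV :: ('k^'n) set)"
    by (rule vec.dim_subset) simp
  finally show ?thesis
    by (simp add: card_cart_basis)
qed

lemma orthonormal_insert:
  assumes "orthonormal E" "v \<in> orth_compl E" "norm v = 1"
  shows "orthonormal (insert v E)" "v \<notin> E"
proof -
  have vv: "ip cj v v = 1"
    using assms(3) by (simp add: ip_self)
  moreover have "ip cj v e = 0" "ip cj e v = 0" if "e \<in> E" for e
    using assms(2) that cj_ip[of v e] by (auto simp: orth_compl_def)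
  ultimately show "orthonormal (insert v E)" "v \<notin> E"
    using assms(1) unfolding orthonormal_def by auto
qed

text \<open>Spectral theorem: a maximal orthonormal set of eigenvectors spans the space.\<close>
lemma self_adjoint_eigenbasis:
  fixes T :: "'k^'n::finite \<Rightarrow> 'k^'n"
  assumes T: "klinear T" "self_adjoint T"
  shows "\<exists>E lam. finite E \<and> orthonormal E \<and> (\<forall>e\<in>E. T e = of_real (lam e) *s e) \<and>
     (\<forall>x. x = (\<Sum>e\<in>E. ip cj x e *s e))"
proof -
  define P where "P E \<longleftrightarrow> finite E \<and> orthonormal E \<and> (\<forall>e\<in>E. \<exists>r. T e = of_real r *s e)" for E
  have "\<exists>E. P E \<and> card E = 0"
    by (rule exI[of _ "{}"]) (simp add: P_def orthonormal_def)
  moreover have "\<forall>k. (\<exists>E. P E \<and> card E = k) \<longrightarrow> k \<le> CARD('n)"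
    by (auto simp: P_def intro!: orthonormal_card_le)
  ultimately have "\<exists>k. (\<exists>E. P E \<and> card E = k) \<and> (\<forall>k'. (\<exists>E. P E \<and> card E = k') \<longrightarrow> k' \<le> k)"
    by (rule Nat.ex_has_greatest_nat[where P = "\<lambda>k. \<exists>E. P E \<and> card E = k"])
  then obtain k where "\<exists>E. P E \<and> card E = k" and k: "\<forall>k'. (\<exists>E. P E \<and> card E = k') \<longrightarrow> k' \<le> k"
    by blast
  then obtain E where E: "P E" and "card E = k"
    by blast
  with k have max: "card E' \<le> card E" if "P E'" for E'
    using that by blast
  from E have fin: "finite E" and on: "orthonormal E" and eig: "\<forall>e\<in>E. \<exists>r. T e = of_real r *s e"
    by (auto simp: P_def)
  have "x = (\<Sum>e\<in>E. ip cj x e *s e)" for x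
  proof (rule ccontr)
    assume "x \<noteq> (\<Sum>e\<in>E. ip cj x e *s e)"
    then have "x - (\<Sum>e\<in>E. ip cj x e *s e) \<noteq> 0"
      by simp
    moreover have "x - (\<Sum>e\<in>E. ip cj x e *s e) \<in> orth_compl E"
      using ip_orthonormal_sum[OF fin on] by (simp add: orth_compl_def ip_diff_left)
    ultimately obtain v M where v: "v \<in> orth_compl E" "norm v = 1" "T v = of_real M *s v"
      using eigenvector_in_orth_compl[OF T eig] by blast
    then have "P (insert v E)"
      using fin eig orthonormal_insert[OF on v(1,2)] by (auto simp: P_def)
    then show False
      using max[of "insert v E"] orthonormal_insert(2)[OF on v(1,2)] fin by simp
  qed
  moreover obtain lam where "\<forall>e\<in>E. T e = of_real (lam e) *s e"
    using eig by metis
  ultimately show ?thesis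
    using fin on by blast
qed

lemma self_adjoint_without_nonzero_eigenvalues:
  fixes D :: "'k^'n::finite \<Rightarrow> 'k^'n"
  assumes D: "klinear D" "self_adjoint D"
    and no_eig: "\<And>v l. D v = of_real l *s v \<Longrightarrow> v \<noteq> 0 \<Longrightarrow> l = 0"
  shows "D x = 0"
proof -
  obtain E lam where on: "orthonormal E" and eig: "\<forall>e\<in>E. D e = of_real (lam e) *s e"
    and exp: "\<forall>x. x = (\<Sum>e\<in>E. ip cj x e *s e)"
    using self_adjoint_eigenbasis[OF D] by blast
  have "D e = 0" if "e \<in> E" for e
  proof -
    have "ip cj e e = 1"
      using on that by (simp add: orthonormal_def)
    then have "e \<noteq> 0"
      by auto
    then show ?thesis
      using no_eig eig that by fastforce
  qed
  then have "D (\<Sum>e\<in>E. ip cj x e *s e) = 0"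
    by (simp add: klinear_sum[OF D(1)] klinear_smult[OF D(1)])
  then show ?thesis
    using exp by metis
qed

section \<open>Positive operators and their square roots\<close>

lemma positive_op_klinear: "positive_op cj T \<Longrightarrow> klinear T"
  by (simp add: positive_op_def)

lemma positive_op_self_adjoint: "positive_op cj T \<Longrightarrow> self_adjoint T"
  by (simp add: positive_op_def self_adjoint_def)

lemma positive_op_form: "positive_op cj T \<Longrightarrow> \<exists>r\<ge>0. ip cj (T x) x = of_real r"
  unfolding positive_op_def by blast

lemma positive_op_form_zero_imp_kernel:
  assumes P: "positive_op cj R" and zero: "ip cj (R v) v = 0"
  shows "R v = 0"
proof (rule nonneg_form_zero_imp_kernel[OF positive_op_klinear[OF P] positive_op_self_adjoint[OF P] _ zero])
  fix t :: real
  obtain r where "r \<ge> 0" "ip cj (R (v - of_real t *s R v)) (v - of_real t *s R v) = of_real r"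
    using positive_op_form[OF P] by blast
  then show "0 \<le> re (ip cj (R (v - of_real t *s R v)) (v - of_real t *s R v))"
    by (simp add: re_of_real)
qed

text \<open>In an eigenbasis \<open>E\<close> of \<open>T\<close>, the root multiplies each coordinate by \<open>sqrt (lam e)\<close>.\<close>
lemma positive_op_sqrt_exists:
  fixes T :: "'k^'n::finite \<Rightarrow> 'k^'n"
  assumes P: "positive_op cj T"
  shows "\<exists>R. positive_op cj R \<and> R \<circ> R = T"
proof -
  obtain E lam where fin: "finite E" and on: "orthonormal E"
    and eig: "\<forall>e\<in>E. T e = of_real (lam e) *s e" and exp: "\<forall>x. x = (\<Sum>e\<in>E. ip cj x e *s e)"
    using self_adjoint_eigenbasis[OF positive_op_klinear[OF P] positive_op_self_adjoint[OF P]]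
    by blast
  have lam: "lam e \<ge> 0" if e: "e \<in> E" for e
  proof -
    obtain r where "r \<ge> 0" "ip cj (T e) e = of_real r"
      using positive_op_form[OF P] by blast
    moreover have "ip cj (T e) e = of_real (lam e)"
      using eig e on by (simp add: ip_scale_left orthonormal_def)
    ultimately show ?thesis
      by simp
  qed
  define s where "s e = (of_real (sqrt (lam e)) :: 'k)" for e
  define R where "R x = (\<Sum>e\<in>E. (s e * ip cj x e) *s e)" for x
  have "klinear R"
    unfolding klinear_def R_def
    by (simp add: ip_add_left ip_scale_left distrib_left vector_sadd_rdistrib sum.distrib
        vec.scale_sum_right vector_smult_assoc mult_ac)
  moreover have "ip cj (R x) y = ip cj x (R y)" for x y
  proof -
    have "ip cj (R x) y = (\<Sum>e\<in>E. s e * ip cj x e * ip cj e y)"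
      by (simp add: R_def ip_sum_left ip_scale_left)
    also have "\<dots> = (\<Sum>e\<in>E. cj (s e * ip cj y e) * ip cj x e)"
      by (rule sum.cong) (simp_all add: s_def cj_mult cj_of_real cj_ip mult_ac)
    also have "\<dots> = ip cj x (R y)"
      by (simp add: R_def ip_sum_right ip_scale_right)
    finally show ?thesis .
  qed
  moreover have "\<exists>r\<ge>0. ip cj (R x) x = of_real r" for x
  proof -
    have "ip cj (R x) x = (\<Sum>e\<in>E. s e * (ip cj x e * cj (ip cj x e)))"
      by (simp add: R_def ip_sum_left ip_scale_left cj_ip mult_ac)
    also have "\<dots> = of_real (\<Sum>e\<in>E. sqrt (lam e) * (norm (ip cj x e))^2)"
      by (simp add: mult_cj s_def)
    moreover have "0 \<le> (\<Sum>e\<in>E. sqrt (lam e) * (norm (ip cj x e))^2)"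
      using lam by (auto intro!: sum_nonneg)
    ultimately show ?thesis
      by auto
  qed
  moreover have "R (R x) = T x" for x
  proof -
    have coord: "ip cj (R x) e = s e * ip cj x e" if "e \<in> E" for e
      unfolding R_def by (rule ip_orthonormal_sum[OF fin on that])
    have s_square: "s e * s e = of_real (lam e)" if "e \<in> E" for e
      using lam[OF that] by (simp add: s_def flip: of_real_mult)
    have "R (R x) = (\<Sum>e\<in>E. (of_real (lam e) * ip cj x e) *s e)"
      unfolding R_def[of "R x"]
      by (rule sum.cong) (simp_all add: coord s_square mult.assoc[symmetric])
    also have "\<dots> = T (\<Sum>e\<in>E. ip cj x e *s e)"
      using positive_op_klinear[OF P]
      by (simp add: klinear_sum klinear_smult eig vector_smult_assoc mult.commute)
    also have "\<dots> = T x"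
      using exp by metis
    finally show ?thesis .
  qed
  ultimately have "positive_op cj R \<and> R \<circ> R = T"
    unfolding positive_op_def by (simp add: fun_eq_iff)
  then show ?thesis
    by blast
qed

text \<open>If \<open>R\<^sub>1 v - R\<^sub>2 v = l v\<close>, then
  \<open>0 = \<langle>R\<^sub>1\<^sup>2 v - R\<^sub>2\<^sup>2 v, v\<rangle> = l (\<langle>R\<^sub>1 v, v\<rangle> + \<langle>R\<^sub>2 v, v\<rangle>)\<close>, so \<open>l = 0\<close> or \<open>R\<^sub>1 v = R\<^sub>2 v = 0\<close>.\<close>
lemma positive_op_sqrt_diff_eigenvalue:
  fixes R1 R2 :: "'k^'n::finite \<Rightarrow> 'k^'n"
  assumes P1: "positive_op cj R1" and P2: "positive_op cj R2" and eq: "R1 \<circ> R1 = R2 \<circ> R2"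
    and v: "R1 v - R2 v = of_real l *s v" "v \<noteq> 0"
  shows "l = 0"
proof (rule ccontr)
  assume l: "l \<noteq> 0"
  obtain r1 where r1: "r1 \<ge> 0" "ip cj (R1 v) v = of_real r1"
    using positive_op_form[OF P1] by blast
  obtain r2 where r2: "r2 \<ge> 0" "ip cj (R2 v) v = of_real r2"
    using positive_op_form[OF P2] by blast
  have "R1 (R1 v - R2 v) + (R1 (R2 v) - R2 (R2 v)) = 0"
    using eq by (simp add: klinear_diff[OF positive_op_klinear[OF P1]] fun_eq_iff)
  moreover have "ip cj (R1 (R2 v) - R2 (R2 v)) v = ip cj (R2 v) (R1 v - R2 v)"
    using positive_op_self_adjoint[OF P1] positive_op_self_adjoint[OF P2]
    by (simp add: self_adjoint_def ip_diff_left ip_diff_right)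
  ultimately have "0 = ip cj (R1 (R1 v - R2 v)) v + ip cj (R2 v) (R1 v - R2 v)"
    by (metis ip_add_left ip_zero_left)
  also have "\<dots> = of_real (l * (r1 + r2))"
    by (simp add: v(1) klinear_smult[OF positive_op_klinear[OF P1]] ip_scale_left ip_scale_right
        r1 r2 cj_of_real distrib_left)
  finally have "l * (r1 + r2) = 0"
    by (metis of_real_eq_0_iff)
  then have "r1 + r2 = 0"
    using l by simp
  then have "r1 = 0" "r2 = 0"
    using r1 r2 by linarith+
  then have "R1 v = 0" "R2 v = 0"
    using positive_op_form_zero_imp_kernel[OF P1] positive_op_form_zero_imp_kernel[OF P2] r1 r2
    by auto
  then show False
    using v l by (simp add: vec_eq_iff)
qed

lemma positive_op_sqrt_unique:
  fixes R1 R2 :: "'k^'n::finite \<Rightarrow> 'k^'n"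
  assumes P1: "positive_op cj R1" and P2: "positive_op cj R2" and eq: "R1 \<circ> R1 = R2 \<circ> R2"
  shows "R1 = R2"
proof -
  define D where "D x = R1 x - R2 x" for x
  have "klinear D"
    using P1 P2 unfolding positive_op_def klinear_def D_def by (auto simp: vector_ssub_ldistrib)
  moreover have "self_adjoint D"
    using positive_op_self_adjoint[OF P1] positive_op_self_adjoint[OF P2]
    unfolding self_adjoint_def D_def by (simp add: ip_diff_left ip_diff_right)
  moreover have "l = 0" if "D v = of_real l *s v" "v \<noteq> 0" for v l
    using positive_op_sqrt_diff_eigenvalue[OF P1 P2 eq] that by (simp add: D_def)
  ultimately have "D x = 0" for x
    by (rule self_adjoint_without_nonzero_eigenvalues)
  then show ?thesis
    by (simp add: fun_eq_iff D_def)
qed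

lemma op_sqrt:
  assumes "positive_op cj (T::'k^'n::finite \<Rightarrow> 'k^'n)"
  shows "positive_op cj (op_sqrt cj T)" "op_sqrt cj T \<circ> op_sqrt cj T = T"
proof -
  have "\<exists>!R. positive_op cj R \<and> R \<circ> R = T"
    using positive_op_sqrt_exists[OF assms] positive_op_sqrt_unique by blast
  then have "positive_op cj (op_sqrt cj T) \<and> op_sqrt cj T \<circ> op_sqrt cj T = T"
    unfolding op_sqrt_def by (rule theI')
  then show "positive_op cj (op_sqrt cj T)" "op_sqrt cj T \<circ> op_sqrt cj T = T"
    by blast+
qed

lemma norm_op_sqrt_square:
  assumes "positive_op cj (T::'k^'n::finite \<Rightarrow> 'k^'n)"
  shows "(norm (op_sqrt cj T x))^2 = norm (ip cj (T x) x)"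
proof -
  have "of_real ((norm (op_sqrt cj T x))^2) = ip cj (op_sqrt cj T x) (op_sqrt cj T x)"
    by (simp add: ip_self)
  also have "\<dots> = ip cj (op_sqrt cj T (op_sqrt cj T x)) x"
    using positive_op_self_adjoint[OF op_sqrt(1)[OF assms]] by (simp add: self_adjoint_def)
  also have "\<dots> = ip cj (T x) x"
    using op_sqrt(2)[OF assms] by (metis comp_apply)
  finally have "norm (of_real ((norm (op_sqrt cj T x))^2) :: 'k) = norm (ip cj (T x) x)"
    by (rule arg_cong)
  then show ?thesis
    by (simp add: norm_power)
qed

section \<open>Frames, the frame operator and duals\<close>

abbreviation frame_op_inv :: "nat \<Rightarrow> (nat \<Rightarrow> 'k^'n::finite) \<Rightarrow> 'k^'n \<Rightarrow> 'k^'n" where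
  "frame_op_inv N F \<equiv> inv (frame_op cj N F)"

lemma klinear_frame_op: "klinear (frame_op cj N F)"
  unfolding klinear_def frame_op_def
  by (simp add: ip_add_left ip_scale_left vector_sadd_rdistrib sum.distrib vec.scale_sum_right
      vector_smult_assoc)

lemma self_adjoint_frame_op: "self_adjoint (frame_op cj N F)"
  unfolding self_adjoint_def frame_op_def
  by (simp add: ip_sum_left ip_sum_right ip_scale_left ip_scale_right cj_ip mult.commute)

lemma ip_frame_op_self: "ip cj (frame_op cj N F x) x = of_real (\<Sum>i=1..N. (norm (ip cj x (F i)))^2)"
proof -
  have "ip cj (frame_op cj N F x) x = (\<Sum>i=1..N. ip cj x (F i) * cj (ip cj x (F i)))"
    unfolding frame_op_def by (simp add: ip_sum_left ip_scale_left cj_ip)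
  then show ?thesis
    by (simp add: mult_cj)
qed

lemma bessel_bound:
  "(\<Sum>i=1..N. (norm (ip cj f (G i)))^2) \<le> (\<Sum>i=1..N. (norm (G i))^2) * (norm f)^2"
proof -
  have "(\<Sum>i=1..N. (norm (ip cj f (G i)))^2) \<le> (\<Sum>i=1..N. (norm f * norm (G i))^2)"
    by (intro sum_mono power_mono norm_ip_le) simp
  then show ?thesis
    by (simp add: power_mult_distrib sum_distrib_left mult.commute)
qed

text \<open>If \<open>f = \<Sum> \<langle>f, g\<^sub>i\<rangle> f\<^sub>i\<close>, then \<open>\<parallel>f\<parallel>\<^sup>2 \<le> \<Sum> |\<langle>f, g\<^sub>i\<rangle>| \<parallel>f\<^sub>i\<parallel> \<parallel>f\<parallel> \<le> sqrt X (\<Sum> \<parallel>f\<^sub>i\<parallel>) \<parallel>f\<parallel>\<close>,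
  where \<open>X = \<Sum> |\<langle>f, g\<^sub>i\<rangle>|\<^sup>2\<close> bounds each single term.\<close>
lemma lower_frame_bound_if_reconstructs:
  fixes F G :: "nat \<Rightarrow> 'k^'n::finite"
  assumes rec: "f = (\<Sum>i=1..N. ip cj f (G i) *s F i)"
  shows "(norm f)^2 / ((\<Sum>i=1..N. norm (F i))^2 + 1) \<le> (\<Sum>i=1..N. (norm (ip cj f (G i)))^2)"
proof -
  define C where "C = (\<Sum>i=1..N. norm (F i))"
  define X where "X = (\<Sum>i=1..N. (norm (ip cj f (G i)))^2)"
  have C: "C \<ge> 0" and X: "X \<ge> 0"
    unfolding C_def X_def by (auto intro: sum_nonneg)
  have coeff: "norm (ip cj f (G i)) \<le> sqrt X" if "i \<in> {1..N}" for i
    unfolding X_def by (rule real_le_rsqrt, rule member_le_sum[OF that]) auto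
  have "(norm f)^2 = norm (ip cj f f)"
    by (simp add: ip_self norm_power)
  also have "\<dots> = norm (\<Sum>i=1..N. ip cj f (G i) * ip cj (F i) f)"
    by (subst (1) rec) (simp add: ip_sum_left ip_scale_left)
  also have "\<dots> \<le> (\<Sum>i=1..N. norm (ip cj f (G i) * ip cj (F i) f))"
    by (rule norm_sum)
  also have "\<dots> \<le> (\<Sum>i=1..N. sqrt X * (norm (F i) * norm f))"
    unfolding norm_mult by (intro sum_mono mult_mono coeff norm_ip_le) (auto simp: X)
  also have "\<dots> = sqrt X * C * norm f"
    by (simp add: C_def sum_distrib_left sum_distrib_right mult_ac)
  finally have "norm f \<le> sqrt X * C"
    by (cases "f = 0") (simp_all add: C X power2_eq_square)
  then have "(norm f)^2 \<le> (sqrt X * C)^2"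
    by (simp add: power_mono)
  also have "\<dots> = X * C^2"
    using X by (simp add: power_mult_distrib)
  also have "\<dots> \<le> X * (C^2 + 1)"
    using X by (simp add: mult_left_mono)
  finally show ?thesis
    unfolding C_def[symmetric] X_def[symmetric] by (simp add: pos_divide_le_eq add_nonneg_pos)
qed

lemma is_frame_if_reconstructs:
  fixes F G :: "nat \<Rightarrow> 'k^'n::finite"
  assumes "\<And>f. f = (\<Sum>i=1..N. ip cj f (G i) *s F i)"
  shows "is_frame cj N G"
  unfolding is_frame_def
proof (intro exI conjI allI)
  let ?A = "1 / ((\<Sum>i=1..N. norm (F i))^2 + 1)" and ?B = "(\<Sum>i=1..N. (norm (G i))^2) + 1"
  show "?A > 0" "?B > 0"
    by (auto intro!: add_nonneg_pos sum_nonneg)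
  fix f
  show "?A * (norm f)^2 \<le> (\<Sum>i=1..N. (norm (ip cj f (G i)))^2)"
    using lower_frame_bound_if_reconstructs[OF assms] by simp
  show "(\<Sum>i=1..N. (norm (ip cj f (G i)))^2) \<le> ?B * (norm f)^2"
    by (intro order_trans[OF bessel_bound] mult_right_mono) simp_all
qed

lemma is_frame_index_nonempty:
  assumes "is_frame cj N (F::nat \<Rightarrow> 'k^'n::finite)"
  shows "{1..N} \<noteq> {}"
proof
  assume "{1..N} = {}"
  moreover obtain A where "A > 0" "\<forall>f::'k^'n. A * (norm f)^2 \<le> (\<Sum>i=1..N. (norm (ip cj f (F i)))^2)"
    using assms unfolding is_frame_def by blast
  ultimately have "A * (norm (axis undefined (1::'k) :: 'k^'n))^2 \<le> 0"
    by simp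
  with \<open>A > 0\<close> show False
    by (simp add: mult_le_0_iff axis_eq_0_iff)
qed

lemma inj_frame_op:
  assumes "is_frame cj N F"
  shows "inj (frame_op cj N F)"
proof -
  obtain A where A: "A > 0" "\<forall>f. A * (norm f)^2 \<le> (\<Sum>i=1..N. (norm (ip cj f (F i)))^2)"
    using assms unfolding is_frame_def by blast
  have "x = 0" if "frame_op cj N F x = 0" for x
  proof -
    have "of_real (\<Sum>i=1..N. (norm (ip cj x (F i)))^2) = (0::'k)"
      using ip_frame_op_self[of N F x] that by simp
    then have "(\<Sum>i=1..N. (norm (ip cj x (F i)))^2) = 0"
      by (simp only: of_real_eq_0_iff)
    then have "A * (norm x)^2 \<le> 0"
      using A(2) by metis
    then show ?thesis
      using A(1) by (simp add: mult_le_0_iff)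
  qed
  then show ?thesis
    by (intro injI) (metis klinear_diff[OF klinear_frame_op] right_minus_eq)
qed

lemma
  assumes "is_frame cj N (F::nat \<Rightarrow> 'k^'n::finite)"
  shows frame_op_inv_right: "frame_op cj N F (frame_op_inv N F x) = x"
    and frame_op_inv_left: "frame_op_inv N F (frame_op cj N F x) = x"
proof -
  have "surj (frame_op cj N F)"
    by (rule vec.linear_inj_imp_surj[OF klinear_imp_vec_linear[OF klinear_frame_op] inj_frame_op[OF assms]])
  then show "frame_op cj N F (frame_op_inv N F x) = x"
    by (rule surj_f_inv_f)
  show "frame_op_inv N F (frame_op cj N F x) = x"
    by (rule inv_f_f[OF inj_frame_op[OF assms]])
qed

lemma positive_frame_op_inv:
  assumes fr: "is_frame cj N (F::nat \<Rightarrow> 'k^'n::finite)"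
  shows "positive_op cj (frame_op_inv N F)"
proof -
  let ?S = "frame_op cj N F" and ?T = "frame_op_inv N F"
  note inverse = frame_op_inv_right[OF fr] frame_op_inv_left[OF fr]
  have S: "ip cj (?S x) y = ip cj x (?S y)" for x y
    using self_adjoint_frame_op unfolding self_adjoint_def by blast
  have "klinear ?T"
    unfolding klinear_def
  proof (intro conjI allI)
    fix x y
    show "?T (x + y) = ?T x + ?T y"
      by (rule injD[OF inj_frame_op[OF fr]]) (simp add: inverse klinear_add[OF klinear_frame_op])
  next
    fix c x
    show "?T (c *s x) = c *s ?T x"
      by (rule injD[OF inj_frame_op[OF fr]]) (simp add: inverse klinear_smult[OF klinear_frame_op])
  qed
  moreover have "ip cj (?T x) y = ip cj x (?T y)" for x y
    using S[of "?T x" "?T y"] by (simp add: inverse)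
  moreover have "\<exists>r\<ge>0. ip cj (?T x) x = of_real r" for x
  proof -
    have "ip cj (?T x) x = ip cj (?S (?T x)) (?T x)"
      using S[of "?T x" "?T x"] by (simp add: inverse)
    also have "\<dots> = of_real (\<Sum>i=1..N. (norm (ip cj (?T x) (F i)))^2)"
      by (rule ip_frame_op_self)
    moreover have "0 \<le> (\<Sum>i=1..N. (norm (ip cj (?T x) (F i)))^2)"
      by (auto intro: sum_nonneg)
    ultimately show ?thesis
      by auto
  qed
  ultimately show ?thesis
    unfolding positive_op_def by blast
qed

lemma expansion_canonical_dual:
  assumes "is_frame cj N F"
  shows "(\<Sum>i=1..N. ip cj x (F i) *s frame_op_inv N F (F i)) = x"
proof -
  have "(\<Sum>i=1..N. ip cj x (F i) *s frame_op_inv N F (F i)) = frame_op_inv N F (frame_op cj N F x)"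
    using positive_op_klinear[OF positive_frame_op_inv[OF assms]]
    unfolding frame_op_def by (simp add: klinear_sum klinear_smult)
  then show ?thesis
    by (simp add: frame_op_inv_left[OF assms])
qed

lemma expansion_canonical_dual_coeffs:
  assumes "is_frame cj N F"
  shows "(\<Sum>i=1..N. ip cj x (frame_op_inv N F (F i)) *s F i) = x"
proof -
  have "(\<Sum>i=1..N. ip cj x (frame_op_inv N F (F i)) *s F i) = frame_op cj N F (frame_op_inv N F x)"
    using positive_op_self_adjoint[OF positive_frame_op_inv[OF assms]]
    unfolding frame_op_def self_adjoint_def by simp
  then show ?thesis
    by (simp add: frame_op_inv_right[OF assms])
qed

lemma is_dual_canonical_dual:
  assumes "is_frame cj N F"
  shows "is_dual cj N F (canonical_dual cj N F)"
proof -
  have "f = (\<Sum>i=1..N. ip cj f (frame_op_inv N F (F i)) *s F i)" for f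
    using expansion_canonical_dual_coeffs[OF assms] by simp
  then have "is_frame cj N (\<lambda>i. frame_op_inv N F (F i))"
    by (rule is_frame_if_reconstructs)
  then show ?thesis
    unfolding is_dual_def canonical_dual_def
    using expansion_canonical_dual[OF assms] expansion_canonical_dual_coeffs[OF assms] by simp
qed

lemma
  assumes "is_dual cj N F G"
  shows is_dual_expansion: "(\<Sum>i=1..N. ip cj f (F i) *s G i) = f"
    and is_dual_expansion_coeffs: "(\<Sum>i=1..N. ip cj f (G i) *s F i) = f"
proof -
  have e: "f = (\<Sum>i=1..N. ip cj f (F i) *s G i) \<and> f = (\<Sum>i=1..N. ip cj f (G i) *s F i)"
    using assms unfolding is_dual_def by blast
  show "(\<Sum>i=1..N. ip cj f (F i) *s G i) = f"
    using conjunct1[OF e] by (rule sym)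
  show "(\<Sum>i=1..N. ip cj f (G i) *s F i) = f"
    using conjunct2[OF e] by (rule sym)
qed

lemma is_dual_add_null:
  fixes F G :: "nat \<Rightarrow> 'k^'n::finite"
  assumes dual: "is_dual cj N F G" and null: "(\<Sum>j=1..N. c j *s F j) = 0"
  shows "is_dual cj N F (\<lambda>j. G j + cj (c j) *s w)"
proof -
  note rec1 = is_dual_expansion[OF dual] and rec2 = is_dual_expansion_coeffs[OF dual]
  have expand1: "(\<Sum>j=1..N. ip cj f (F j) *s (G j + cj (c j) *s w)) = f" for f
  proof -
    have "(\<Sum>j=1..N. ip cj f (F j) *s (G j + cj (c j) *s w))
        = f + (\<Sum>j=1..N. ip cj f (F j) *s (cj (c j) *s w))"
      by (simp only: vector_add_ldistrib sum.distrib rec1)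
    also have "(\<Sum>j=1..N. ip cj f (F j) *s (cj (c j) *s w)) = cj (ip cj (\<Sum>j=1..N. c j *s F j) f) *s w"
      by (simp add: vector_smult_assoc ip_sum_left ip_scale_left cj_sum cj_mult cj_ip
          vec.scale_sum_left mult.commute)
    finally show ?thesis
      by (simp only: null ip_zero_left cj_zero vector_smult_lzero add_0_right)
  qed
  have expand2: "(\<Sum>j=1..N. ip cj f (G j + cj (c j) *s w) *s F j) = f" for f
  proof -
    have "(\<Sum>j=1..N. ip cj f (G j + cj (c j) *s w) *s F j) = f + (\<Sum>j=1..N. (c j * ip cj f w) *s F j)"
      by (simp only: ip_add_right ip_scale_right cj_cj vector_sadd_rdistrib sum.distrib rec2)
    also have "(\<Sum>j=1..N. (c j * ip cj f w) *s F j) = ip cj f w *s (\<Sum>j=1..N. c j *s F j)"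
      by (simp add: vec.scale_sum_right vector_smult_assoc mult.commute)
    finally show ?thesis
      by (simp only: null vector_smult_rzero add_0_right)
  qed
  have "is_frame cj N (\<lambda>j. G j + cj (c j) *s w)"
    by (rule is_frame_if_reconstructs[where F = F]) (simp only: expand2)
  then show ?thesis
    unfolding is_dual_def by (simp only: expand1 expand2 simp_thms)
qed

text \<open>The difference \<open>u\<close> of two duals satisfies \<open>\<Sum> \<langle>h, u\<^sub>j\<rangle> f\<^sub>j = 0\<close> for every \<open>h\<close>.\<close>
lemma duals_agree_on_independent_part:
  fixes F G G' :: "nat \<Rightarrow> 'k^'n::finite"
  assumes G: "is_dual cj N F G" and G': "is_dual cj N F G'"
    and L: "L \<subseteq> {1..N}" "kspan_fam L F \<inter> kspan_fam ({1..N} - L) F = {0}" "lin_indep_fam L F"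
    and i: "i \<in> L"
  shows "G i = G' i"
proof -
  define u where "u j = G j - G' j" for j
  have "ip cj h (u j) = 0" if "j \<in> L" for h j
  proof -
    have "(\<Sum>j=1..N. ip cj h (u j) *s F j) = 0"
      using is_dual_expansion_coeffs[OF G, of h] is_dual_expansion_coeffs[OF G', of h]
      by (simp add: u_def ip_diff_right vector_sub_rdistrib sum_subtractf)
    then have "(\<Sum>j\<in>L. ip cj h (u j) *s F j) = - (\<Sum>j\<in>{1..N} - L. ip cj h (u j) *s F j)"
      using sum.subset_diff[OF L(1), of "\<lambda>j. ip cj h (u j) *s F j"]
      by (simp add: eq_neg_iff_add_eq_0 add.commute)
    also have "\<dots> = (\<Sum>j\<in>{1..N} - L. (- ip cj h (u j)) *s F j)"
      by (simp add: sum_negf)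
    finally have "(\<Sum>j\<in>L. ip cj h (u j) *s F j) = 0"
      by (rule kspan_fam_trivial_inter_sum_eq_0[OF L(2)])
    then show ?thesis
      using L(3)[unfolded lin_indep_fam_def, rule_format, of "\<lambda>j. ip cj h (u j)"] that by blast
  qed
  then have "ip cj (u i) (u i) = 0"
    using i by blast
  then show ?thesis
    by (simp add: ip_self_eq_0_iff u_def)
qed

definition rank_one :: "'k^'n::finite \<Rightarrow> 'k^'n \<Rightarrow> 'k^'n \<Rightarrow> 'k^'n" where
  "rank_one u g f = ip cj f u *s g"

lemma klinear_rank_one: "klinear (rank_one u g)"
  unfolding klinear_def rank_one_def
  by (simp add: ip_add_left ip_scale_left vector_sadd_rdistrib vector_smult_assoc)

lemma onorm_rank_one: "onorm (rank_one u g) = norm u * norm g"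
proof (rule antisym)
  show "onorm (rank_one u g) \<le> norm u * norm g"
  proof (rule onorm_le)
    fix x
    show "norm (rank_one u g x) \<le> norm u * norm g * norm x"
      using mult_right_mono[OF norm_ip_le[of x u], of "norm g"]
      by (simp add: rank_one_def norm_vector_smult mult_ac)
  qed
next
  have bl: "bounded_linear (rank_one u g)"
    by (rule klinear_imp_bounded_linear[OF klinear_rank_one])
  have "norm u * norm g * norm u = norm (rank_one u g u)"
    by (simp add: rank_one_def norm_vector_smult ip_self power2_eq_square norm_mult)
  also have "\<dots> \<le> onorm (rank_one u g) * norm u"
    by (rule onorm[OF bl])
  finally show "norm u * norm g \<le> onorm (rank_one u g)"
    using onorm_pos_le[OF bl] by (cases "u = 0") (simp_all add: mult_le_cancel_right)
qed

text \<open>Taking the inner product of \<open>\<langle>v, u\<rangle> g = c v\<close> with \<open>u\<close> shows that every eigenvalue is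
  \<open>0\<close> or \<open>\<langle>g, u\<rangle>\<close>.\<close>
lemma norm_eigenvalue_rank_one_le:
  assumes "is_eigenvalue (rank_one u g) c"
  shows "norm c \<le> norm (ip cj g u)"
proof -
  obtain v where v: "v \<noteq> 0" "ip cj v u *s g = c *s v"
    using assms unfolding is_eigenvalue_def rank_one_def by blast
  then have "ip cj (ip cj v u *s g) u = ip cj (c *s v) u"
    by simp
  then have "ip cj v u * ip cj g u = c * ip cj v u"
    by (simp only: ip_scale_left)
  then consider "ip cj v u = 0" | "c = ip cj g u"
    by (metis mult.commute mult_left_cancel)
  then show ?thesis
  proof cases
    case 1
    then have "c *s v = 0"
      using v(2) by simp
    with v(1) show ?thesis
      by (auto simp: vec_eq_iff)
  qed simp
qed

lemma spec_radius_rank_one: "spec_radius (rank_one u g) = norm (ip cj g u)"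
proof -
  let ?S = "{norm c | c. is_eigenvalue (rank_one u g) c}"
  define v where "v = (if g = 0 then axis undefined 1 else g)"
  have "v \<noteq> 0" "rank_one u g v = ip cj g u *s v"
    by (auto simp: v_def axis_eq_0_iff rank_one_def)
  then have "norm (ip cj g u) \<in> ?S"
    unfolding is_eigenvalue_def by blast
  moreover have "Sup ?S = norm (ip cj g u)"
    by (rule cSup_eq_maximum[OF calculation]) (auto simp: norm_eigenvalue_rank_one_le)
  ultimately show ?thesis
    unfolding spec_radius_def Let_def by auto
qed

lemma error_op_singleton: "error_op cj q F G {i} = rank_one (of_real (q i) *s F i) (G i)"
  by (simp add: fun_eq_iff error_op_def rank_one_def ip_scale_right cj_of_real)

definition erasure_cost :: "(nat \<Rightarrow> real) \<Rightarrow> (nat \<Rightarrow> 'k^'n::finite) \<Rightarrow> (nat \<Rightarrow> 'k^'n) \<Rightarrow> nat \<Rightarrow> real"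
  where "erasure_cost q F G i = (\<bar>q i\<bar> * norm (F i) * norm (G i) + \<bar>q i\<bar> * norm (ip cj (G i) (F i))) / 2"

lemma A1_eq_Max_erasure_cost:
  "A1 cj N p F (G::nat \<Rightarrow> 'k^'n::finite) = Max (erasure_cost (weight_num N CARD('n) p) F G ` {1..N})"
  unfolding A1_def error_op_singleton onorm_rank_one spec_radius_rank_one erasure_cost_def
  by (simp add: norm_vector_smult ip_scale_right cj_of_real norm_mult)

lemma A1_le_iff:
  fixes G :: "nat \<Rightarrow> 'k^'n::finite"
  assumes "{1..N} \<noteq> {}"
  shows "A1 cj N p F G \<le> x \<longleftrightarrow> (\<forall>i\<in>{1..N}. erasure_cost (weight_num N CARD('n) p) F G i \<le> x)"
  using assms by (simp add: A1_eq_Max_erasure_cost)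

lemma erasure_cost_le_A1:
  "i \<in> {1..N} \<Longrightarrow> erasure_cost (weight_num N CARD('n) p) F G i \<le> A1 cj N p F (G::nat \<Rightarrow> 'k^'n::finite)"
  by (simp add: A1_eq_Max_erasure_cost)

lemma tendsto_erasure_cost_perturb:
  "((\<lambda>t. erasure_cost q F (\<lambda>j. G j + t *\<^sub>R D j) i) \<longlongrightarrow> erasure_cost q F G i) (at 0)"
proof -
  have "isCont (\<lambda>t. erasure_cost q F (\<lambda>j. G j + t *\<^sub>R D j) i) 0"
    unfolding erasure_cost_def ip_add_left ip_scaleR_left by (intro continuous_intros) simp
  then show ?thesis
    by (simp add: isCont_def)
qed

section \<open>Optimality of the canonical dual\<close>

lemma Lambda1_subset: "Lambda1 cj N p F \<subseteq> {1..N}"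
  unfolding Lambda1_def by blast

text \<open>For \<open>p i = 1\<close> the denominator vanishes and the weight is \<open>0\<close>, as \<open>x / 0 = 0\<close>.\<close>
lemma weight_num_nonneg:
  assumes "prob_seq N p" "i \<in> {1..N}"
  shows "weight_num N n p i \<ge> 0"
  using assms by (auto simp: prob_seq_def weight_num_def intro!: mult_nonneg_nonneg divide_nonneg_nonneg)

text \<open>Uses \<open>\<parallel>S\<^sup>-\<^sup>1\<^sup>/\<^sup>2 f\<parallel>\<^sup>2 = \<langle>S\<^sup>-\<^sup>1 f, f\<rangle>\<close>.\<close>
lemma crit_eq_erasure_cost:
  fixes F :: "nat \<Rightarrow> 'k^'n::finite"
  assumes fr: "is_frame cj N F" and pr: "prob_seq N p" and i: "i \<in> {1..N}"
  shows "crit cj N p F i = 2 * erasure_cost (weight_num N CARD('n) p) F (canonical_dual cj N F) i"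
proof -
  have "\<bar>weight_num N CARD('n) p i\<bar> = weight_num N CARD('n) p i"
    using weight_num_nonneg[OF pr i] by simp
  moreover have "(norm (op_sqrt cj (frame_op_inv N F) (F i)))^2
      = norm (ip cj (frame_op_inv N F (F i)) (F i))"
    by (rule norm_op_sqrt_square[OF positive_frame_op_inv[OF fr]])
  ultimately show ?thesis
    unfolding crit_def erasure_cost_def canonical_dual_def Let_def by (simp add: add.commute)
qed

lemma erasure_cost_canonical_dual_le_lmax:
  fixes F :: "nat \<Rightarrow> 'k^'n::finite"
  assumes "is_frame cj N F" "prob_seq N p" "i \<in> {1..N}"
  shows "erasure_cost (weight_num N CARD('n) p) F (canonical_dual cj N F) i \<le> lmax cj N p F / 2"
proof -
  have "crit cj N p F i \<le> lmax cj N p F"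
    using assms(3) by (simp add: lmax_def)
  then show ?thesis
    using crit_eq_erasure_cost[OF assms] by simp
qed

lemma erasure_cost_canonical_dual_less_lmax:
  fixes F :: "nat \<Rightarrow> 'k^'n::finite"
  assumes "is_frame cj N F" "prob_seq N p" "i \<in> {1..N} - Lambda1 cj N p F"
  shows "erasure_cost (weight_num N CARD('n) p) F (canonical_dual cj N F) i < lmax cj N p F / 2"
proof -
  have "crit cj N p F i < lmax cj N p F"
    using assms(3) by (auto simp: Lambda1_def lmax_def less_le)
  then show ?thesis
    using crit_eq_erasure_cost[OF assms(1,2)] assms(3) by simp
qed

lemma A1_canonical_dual_le_lmax:
  fixes F :: "nat \<Rightarrow> 'k^'n::finite"
  assumes fr: "is_frame cj N F" and "prob_seq N p"
  shows "A1 cj N p F (canonical_dual cj N F) \<le> lmax cj N p F / 2"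
  unfolding A1_le_iff[OF is_frame_index_nonempty[OF fr]]
  using erasure_cost_canonical_dual_le_lmax[OF assms] by blast

lemma lmax_le_A1_dual:
  fixes F :: "nat \<Rightarrow> 'k^'n::finite"
  assumes fr: "is_frame cj N F" and pr: "prob_seq N p"
    and int: "kspan_fam (Lambda1 cj N p F) F \<inter> kspan_fam ({1..N} - Lambda1 cj N p F) F = {0}"
    and li: "lin_indep_fam (Lambda1 cj N p F) F"
    and dual: "is_dual cj N F G"
  shows "lmax cj N p F / 2 \<le> A1 cj N p F G"
proof -
  have "lmax cj N p F \<in> crit cj N p F ` {1..N}"
    unfolding lmax_def using is_frame_index_nonempty[OF fr] by (intro Max_in) auto
  then obtain i where i: "i \<in> Lambda1 cj N p F"
    by (auto simp: Lambda1_def)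
  have agree: "G i = canonical_dual cj N F i"
    using duals_agree_on_independent_part[OF dual is_dual_canonical_dual[OF fr] Lambda1_subset int li i] .
  have "i \<in> {1..N}" "crit cj N p F i = lmax cj N p F"
    using i by (auto simp: Lambda1_def)
  then have "lmax cj N p F / 2 = erasure_cost (weight_num N CARD('n) p) F (canonical_dual cj N F) i"
    using crit_eq_erasure_cost[OF fr pr] by simp
  also have "\<dots> = erasure_cost (weight_num N CARD('n) p) F G i"
    using agree by (simp add: erasure_cost_def)
  also have "\<dots> \<le> A1 cj N p F G"
    by (rule erasure_cost_le_A1[OF \<open>i \<in> {1..N}\<close>])
  finally show ?thesis .
qed

lemma in_pasod1_if_A1_le_lmax:
  assumes "is_frame cj N F" "prob_seq N p"
    and "kspan_fam (Lambda1 cj N p F) F \<inter> kspan_fam ({1..N} - Lambda1 cj N p F) F = {0}"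
    and "lin_indep_fam (Lambda1 cj N p F) F"
    and "is_dual cj N F G" "A1 cj N p F G \<le> lmax cj N p F / 2"
  shows "G \<in> pasod1 cj N p F"
  using assms lmax_le_A1_dual[OF assms(1-4)] unfolding pasod1_def by (blast intro: order_trans)

lemma canonical_dual_in_pasod1:
  assumes "is_frame cj N F" "prob_seq N p"
    and "kspan_fam (Lambda1 cj N p F) F \<inter> kspan_fam ({1..N} - Lambda1 cj N p F) F = {0}"
    and "lin_indep_fam (Lambda1 cj N p F) F"
  shows "canonical_dual cj N F \<in> pasod1 cj N p F"
  using assms is_dual_canonical_dual A1_canonical_dual_le_lmax by (blast intro: in_pasod1_if_A1_le_lmax)

lemma eventually_perturbed_erasure_cost_less_lmax:
  fixes F :: "nat \<Rightarrow> 'k^'n::finite"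
  assumes fr: "is_frame cj N F" and pr: "prob_seq N p"
    and L: "finite L" "L \<subseteq> {1..N} - Lambda1 cj N p F"
  shows "\<forall>\<^sub>F t in at 0. \<forall>i\<in>L. erasure_cost (weight_num N CARD('n) p) F
      (\<lambda>j. canonical_dual cj N F j + t *\<^sub>R D j) i < lmax cj N p F / 2"
proof (intro eventually_ball_finite[OF L(1)] ballI)
  fix i assume "i \<in> L"
  then have "erasure_cost (weight_num N CARD('n) p) F (canonical_dual cj N F) i < lmax cj N p F / 2"
    using L(2) by (intro erasure_cost_canonical_dual_less_lmax[OF fr pr]) auto
  then show "\<forall>\<^sub>F t in at 0. erasure_cost (weight_num N CARD('n) p) F
      (\<lambda>j. canonical_dual cj N F j + t *\<^sub>R D j) i < lmax cj N p F / 2"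
    by (rule order_tendstoD(2)[OF tendsto_erasure_cost_perturb])
qed

text \<open>A null combination \<open>\<Sum> c\<^sub>j f\<^sub>j = 0\<close> supported off \<^const>\<open>Lambda1\<close> moves the canonical dual only
  where its erasure cost is strictly below the optimum, so small moves stay optimal.\<close>
lemma other_dual_in_pasod1:
  fixes F :: "nat \<Rightarrow> 'k^'n::finite"
  assumes fr: "is_frame cj N F" and pr: "prob_seq N p"
    and int: "kspan_fam (Lambda1 cj N p F) F \<inter> kspan_fam ({1..N} - Lambda1 cj N p F) F = {0}"
    and li: "lin_indep_fam (Lambda1 cj N p F) F"
    and N: "N > CARD('n)"
  shows "\<exists>G\<in>pasod1 cj N p F. \<exists>i\<in>{1..N}. G i \<noteq> canonical_dual cj N F i"
proof -
  define L2 where "L2 = {1..N} - Lambda1 cj N p F"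
  obtain c j0 where null: "(\<Sum>j\<in>L2. c j *s F j) = 0" and j0: "j0 \<in> L2" "c j0 \<noteq> 0"
    using dependent_complement[OF Lambda1_subset int li N] unfolding L2_def[symmetric] lin_indep_fam_def
    by blast
  define c' where "c' j = (if j \<in> L2 then c j else 0)" for j
  define w where "w = (axis undefined 1 :: 'k^'n)"
  define G where "G t = (\<lambda>j. canonical_dual cj N F j + t *\<^sub>R (cj (c' j) *s w))" for t :: real
  have "(\<Sum>j=1..N. c' j *s F j) = (\<Sum>j\<in>L2. c j *s F j)"
    unfolding c'_def by (rule sum.mono_neutral_cong_right) (auto simp: L2_def)
  with null have "is_dual cj N F (\<lambda>j. canonical_dual cj N F j + cj (c' j) *s (t *\<^sub>R w))" for t
    by (intro is_dual_add_null is_dual_canonical_dual[OF fr]) simp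
  then have dual: "is_dual cj N F (G t)" for t
    by (simp add: G_def scaleR_eq_of_real_smult vector_smult_assoc mult.commute)
  have "\<forall>\<^sub>F t in at 0. \<forall>i\<in>L2. erasure_cost (weight_num N CARD('n) p) F (G t) i < lmax cj N p F / 2"
    unfolding G_def by (rule eventually_perturbed_erasure_cost_less_lmax[OF fr pr]) (auto simp: L2_def)
  then obtain t where t: "t \<noteq> 0"
    and L2: "\<forall>i\<in>L2. erasure_cost (weight_num N CARD('n) p) F (G t) i < lmax cj N p F / 2"
    using eventually_happens'[OF at_neq_bot eventually_conj[OF _ eventually_neq_at_within]] by blast
  have "erasure_cost (weight_num N CARD('n) p) F (G t) i \<le> lmax cj N p F / 2" if i: "i \<in> {1..N}" for i
  proof (cases "i \<in> L2")
    case False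
    then have "G t i = canonical_dual cj N F i"
      by (simp add: G_def c'_def)
    then show ?thesis
      using erasure_cost_canonical_dual_le_lmax[OF fr pr i] by (simp add: erasure_cost_def)
  qed (use L2 in auto)
  then have "A1 cj N p F (G t) \<le> lmax cj N p F / 2"
    unfolding A1_le_iff[OF is_frame_index_nonempty[OF fr]] by blast
  then have "G t \<in> pasod1 cj N p F"
    by (rule in_pasod1_if_A1_le_lmax[OF fr pr int li dual])
  moreover have "G t j0 \<noteq> canonical_dual cj N F j0"
    using t j0 cj_cj[of "c j0"] by (auto simp: G_def w_def c'_def vec_eq_iff axis_def)
  moreover have "j0 \<in> {1..N}"
    using j0 by (simp add: L2_def)
  ultimately show ?thesis
    by blast
qed

end

lemma conjugation_complex: "conjugation cnj Re"
proof
  fix a :: complex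
  assume "cnj a = a"
  then show "a = complex_of_real (Re a)"
    by (simp add: complex_eq_iff)
qed (simp_all add: inner_complex_def flip: complex_norm_square)

lemma conjugation_real: "conjugation (id :: real \<Rightarrow> real) id"
  by unfold_locales (simp_all add: power2_eq_square)

theorem theorem3p9:
  shows
  "(\<forall>(F :: nat \<Rightarrow> complex^'n) (p :: nat \<Rightarrow> real) (N :: nat).
      is_frame cnj N F \<and> prob_seq N p \<and>
      kspan_fam (Lambda1 cnj N p F) F \<inter> kspan_fam ({1..N} - Lambda1 cnj N p F) F = {0} \<and>
      lin_indep_fam (Lambda1 cnj N p F) F
      \<longrightarrow> canonical_dual cnj N F \<in> pasod1 cnj N p F \<and>
          (N > CARD('n) \<longrightarrow> (\<exists>G\<in>pasod1 cnj N p F. \<exists>i\<in>{1..N}. G i \<noteq> canonical_dual cnj N F i)))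
   \<and>
   (\<forall>(F :: nat \<Rightarrow> real^'m) (p :: nat \<Rightarrow> real) (N :: nat).
      is_frame id N F \<and> prob_seq N p \<and>
      kspan_fam (Lambda1 id N p F) F \<inter> kspan_fam ({1..N} - Lambda1 id N p F) F = {0} \<and>
      lin_indep_fam (Lambda1 id N p F) F
      \<longrightarrow> canonical_dual id N F \<in> pasod1 id N p F \<and>
          (N > CARD('m) \<longrightarrow> (\<exists>G\<in>pasod1 id N p F. \<exists>i\<in>{1..N}. G i \<noteq> canonical_dual id N F i)))"
  by (intro conjI allI impI; elim conjE;
      rule conjugation.canonical_dual_in_pasod1[OF conjugation_complex]
        conjugation.other_dual_in_pasod1[OF conjugation_complex]
        conjugation.canonical_dual_in_pasod1[OF conjugation_real]
        conjugation.other_dual_in_pasod1[OF conjugation_real])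

end
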